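(* Let $d\geq1$ be an integer. Let $a_{i,j}$ ($0\leq i,j\leq d$, $i\neq j$) be complex numbers satisfying $a_{i,j}=a_{j,i}$ for all $i\neq j$, \[ g(a_{i,j},a_{j,k},a_{i,k})=0\quad\text{for all pairwise distinct } i,j,k, \] \[ h(a_{i,j},a_{i,k},a_{i,\ell},a_{j,k},a_{j,\ell},a_{k,\ell})=0\quad\text{for all pairwise distinct } i,j,k,\ell. \] Assume that $a_{i_0,i_1}\neq\pm2$ for some $i_0,i_1$ with $0\leq i_0<i_1\leq d$, and let $w_{i_0},w_{i_1}$ be nonzero complex numbers with $\frac{w_{i_0}}{w_{i_1}}+\frac{w_{i_1}}{w_{i_0}}=a_{i_0,i_1}$. Then for complex numbers $w_i$ ($0\leq i\leq d$, $i\neq i_0,i_1$) the following are equivalent: (i) for all $i,j$ with $0\leq i,j\leq d$ and $i\neq j$, $\frac{w_j}{w_i}+\frac{w_i}{w_j}=a_{i,j}$; (ii) for all $i$ with $0\leq i\leq d$, $i\neq i_0,i_1$, \[ w_i=\frac{w_{i_1}^2-w_{i_0}^2}{a_{i_1,i}w_{i_1}-a_{i_0,i}w_{i_0}}. \] Moreover, if one of the two equivalent conditions holds, all $a_{i,j}$ ($0\leq i<j\leq d$) are real, and $-2<a_{i_0,i_1}<2$, then $|w_i|=|w_j|$ for all $0\leq i<j\leq d$.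
   Context: Here $g(X,Y,Z)=X^2+Y^2+Z^2-XYZ-4$ and \[ h(X_{0,1},X_{0,2},X_{0,3},X_{1,2},X_{1,3},X_{2,3})=\det\begin{bmatrix}2&X_{0,1}&X_{0,2}\\ X_{0,1}&2&X_{1,2}\\ X_{0,3}&X_{1,3}&X_{2,3}\end{bmatrix}. \] *)

theory Defs
  imports "HOL-Analysis.Analysis"
begin

definition g :: "complex \<Rightarrow> complex \<Rightarrow> complex \<Rightarrow> complex" where
  "g X Y Z = X^2 + Y^2 + Z^2 - X*Y*Z - 4"

definition h :: "complex \<Rightarrow> complex \<Rightarrow> complex \<Rightarrow> complex \<Rightarrow> complex \<Rightarrow> complex \<Rightarrow> complex" where
  "h X01 X02 X03 X12 X13 X23 =
     det (vector [vector [2, X01, X02], vector [X01, 2, X12], vector [X03, X13, X23]]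
          :: complex ^ 3 ^ 3)"

end

theory Submission
  imports Defs
begin

text \<open>Each \<open>w\<^sub>i\<close> is pinned down by its relations with the two anchors: subtracting
  \<open>w\<^sub>i\<^sup>2 + w\<^sub>i\<^sub>1\<^sup>2 = a\<^sub>i\<^sub>1\<^sub>i w\<^sub>i w\<^sub>i\<^sub>1\<close> and \<open>w\<^sub>i\<^sup>2 + w\<^sub>i\<^sub>0\<^sup>2 = a\<^sub>i\<^sub>0\<^sub>i w\<^sub>i w\<^sub>i\<^sub>0\<close> gives the
  displayed formula, and conversely \<open>g = 0\<close> on the triangle \<open>i\<^sub>0 i\<^sub>1 i\<close> is exactly what
  makes the formula solve both equations. For two further indices \<open>i, j\<close>, the determinant
  \<open>h\<close> evaluated at these relations factors as \<open>(4 - a\<^sub>i\<^sub>0\<^sub>i\<^sub>1\<^sup>2)(a\<^sub>i\<^sub>j - (w\<^sub>j/w\<^sub>i + w\<^sub>i/w\<^sub>j))\<close>,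
  so \<open>h = 0\<close> forces the remaining relations.
  For the moduli: if \<open>t + 1/t\<close> is real then \<open>t\<close> is real or \<open>|t| = 1\<close>, and real \<open>t\<close> gives
  \<open>|t + 1/t| \<ge> 2\<close>. So \<open>w\<^sub>i\<^sub>0/w\<^sub>i\<^sub>1\<close> is non-real and unimodular; being the quotient of
  \<open>w\<^sub>i/w\<^sub>i\<^sub>1\<close> by \<open>w\<^sub>i/w\<^sub>i\<^sub>0\<close>, one of these is non-real, hence unimodular, and then so is
  the other.\<close>

lemma h_expand:
  "h X01 X02 X03 X12 X13 X23 =
     2 * (2 * X23 - X12 * X13) - X01 * (X01 * X23 - X12 * X03) + X02 * (X01 * X13 - 2 * X03)"
  unfolding h_def by (simp add: det_3 algebra_simps)

lemma add_divide_swap_eq_iff: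
  fixes p q c :: "'a::field"
  assumes "p \<noteq> 0" "q \<noteq> 0"
  shows "p / q + q / p = c \<longleftrightarrow> p\<^sup>2 + q\<^sup>2 = c * p * q"
  using assms by (auto simp: field_simps power2_eq_square)

lemma square_neq_if_coeff_neq_pm2:
  fixes x y c :: "'a::field"
  assumes "x \<noteq> 0" "y \<noteq> 0" "x\<^sup>2 + y\<^sup>2 = c * x * y" "c \<noteq> 2" "c \<noteq> -2"
  shows "y\<^sup>2 \<noteq> x\<^sup>2"
proof
  assume "y\<^sup>2 = x\<^sup>2"
  then have "x = y \<or> x = - y" by (metis power2_eq_iff)
  then have "(2 - c) * (y * y) = 0 \<or> (2 + c) * (y * y) = 0"
    using assms(3) by (auto simp: algebra_simps power2_eq_square)
  then show False
    using assms(2,4,5) by (auto simp: add_eq_0_iff)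
qed

lemma g_denominator_nonzero:
  fixes x y c b e :: complex
  assumes "x \<noteq> 0" "y \<noteq> 0" and c: "x\<^sup>2 + y\<^sup>2 = c * x * y" "c \<noteq> 2" "c \<noteq> -2"
    and "g c b e = 0"
  shows "b * y - e * x \<noteq> 0"
proof
  assume "b * y - e * x = 0"
  then have "x\<^sup>2 * y\<^sup>2 * g c b e = (y\<^sup>2 - x\<^sup>2)\<^sup>2"
    using c(1) unfolding g_def by algebra
  then show False
    using assms square_neq_if_coeff_neq_pm2[OF assms(1,2) c] by simp
qed

lemma g_common_solution:
  fixes x y c b e u :: complex
  assumes "x \<noteq> 0" "y \<noteq> 0" and c: "x\<^sup>2 + y\<^sup>2 = c * x * y" "c \<noteq> 2" "c \<noteq> -2"
    and g: "g c b e = 0"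
    and u: "u = (y\<^sup>2 - x\<^sup>2) / (b * y - e * x)"
  shows "u \<noteq> 0" "u\<^sup>2 + y\<^sup>2 = b * u * y" "u\<^sup>2 + x\<^sup>2 = e * u * x"
proof -
  have D: "b * y - e * x \<noteq> 0"
    using g_denominator_nonzero[OF assms(1,2) c g] .
  have uD: "u * (b * y - e * x) = y\<^sup>2 - x\<^sup>2"
    using u D by simp
  have gE: "c\<^sup>2 + b\<^sup>2 + e\<^sup>2 - c * b * e - 4 = 0"
    using g by (simp add: g_def)
  show "u \<noteq> 0"
    using uD square_neq_if_coeff_neq_pm2[OF assms(1,2) c] by auto
  have "(b * y - e * x)\<^sup>2 * (u\<^sup>2 + y\<^sup>2 - b * u * y) = 0"
    using uD c(1) gE by algebra
  then show "u\<^sup>2 + y\<^sup>2 = b * u * y"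
    using D by simp
  have "(b * y - e * x)\<^sup>2 * (u\<^sup>2 + x\<^sup>2 - e * u * x) = 0"
    using uD c(1) gE by algebra
  then show "u\<^sup>2 + x\<^sup>2 = e * u * x"
    using D by simp
qed

lemma common_solution_unique:
  fixes x y b e u :: "'a::field"
  assumes "x \<noteq> 0" "y \<noteq> 0" "u / y + y / u = b" "u / x + x / u = e" "b * y - e * x \<noteq> 0"
  shows "u = (y\<^sup>2 - x\<^sup>2) / (b * y - e * x)"
proof -
  have "u \<noteq> 0"
    using assms by auto
  then have "u\<^sup>2 + y\<^sup>2 = b * u * y" "u\<^sup>2 + x\<^sup>2 = e * u * x"
    using assms add_divide_swap_eq_iff by blast+
  then have "u * (b * y - e * x) = y\<^sup>2 - x\<^sup>2"
    by algebra
  then show ?thesis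
    using assms(5) by (simp add: field_simps)
qed

lemma h_at_ratio_sums:
  fixes x y u v c :: complex
  assumes "x \<noteq> 0" "y \<noteq> 0" "u \<noteq> 0" "v \<noteq> 0"
  shows "h (x / y + y / x) (u / x + x / u) (v / x + x / v) (u / y + y / u) (v / y + y / v) c
           = (4 - (x / y + y / x)\<^sup>2) * (c - (v / u + u / v))"
  unfolding h_expand using assms
  by (simp add: field_simps) (simp add: algebra_simps power2_eq_square power3_eq_cube)

lemma h_determines_last_entry:
  fixes x y u v c :: complex
  assumes "x \<noteq> 0" "y \<noteq> 0" "u \<noteq> 0" "v \<noteq> 0"
    and "x / y + y / x \<noteq> 2" "x / y + y / x \<noteq> -2"
    and "h (x / y + y / x) (u / x + x / u) (v / x + x / v) (u / y + y / u) (v / y + y / v) c = 0"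
  shows "c = v / u + u / v"
proof -
  have "4 - (x / y + y / x)\<^sup>2 \<noteq> 0"
    using assms(5,6) power2_eq_iff[of "x / y + y / x" 2] by auto
  then show ?thesis
    using assms(7) h_at_ratio_sums[OF assms(1-4)] by simp
qed

lemma abs_Re_plus_inverse_ge_2:
  fixes x :: complex
  assumes "x \<in> \<real>" "x \<noteq> 0"
  shows "2 \<le> \<bar>Re (x + 1 / x)\<bar>"
proof -
  obtain r where r: "x = of_real r" "r \<noteq> 0"
    using assms by (auto elim: Reals_cases)
  have "(r + 1 / r)\<^sup>2 = (r - 1 / r)\<^sup>2 + 2\<^sup>2"
    using r(2) by (simp add: field_simps power2_eq_square)
  then have "\<bar>2\<bar> \<le> \<bar>r + 1 / r\<bar>"
    unfolding abs_le_square_iff by simp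
  then show ?thesis
    using r by simp
qed

lemma cmod_eq_1_if_plus_inverse_real:
  fixes t :: complex
  assumes "t \<notin> \<real>" "t + 1 / t \<in> \<real>"
  shows "cmod t = 1"
proof -
  define n where "n = (Re t)\<^sup>2 + (Im t)\<^sup>2"
  have "Im t \<noteq> 0"
    using assms(1) by (simp add: complex_is_Real_iff)
  then have "n \<noteq> 0"
    unfolding n_def by (simp add: sum_power2_eq_zero_iff)
  have "Im (1 / t) = - Im t / n"
    unfolding n_def by (simp add: Im_divide power2_eq_square)
  then have "Im t * (1 - 1 / n) = 0"
    using assms(2) by (simp add: complex_is_Real_iff algebra_simps)
  then have "n = 1"
    using \<open>Im t \<noteq> 0\<close> \<open>n \<noteq> 0\<close> by (simp add: field_simps)
  then show ?thesis
    unfolding cmod_def n_def by simp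
qed

lemma cmod_eq_1_of_nonreal_unimodular_quotient:
  fixes s t :: complex
  assumes "s \<noteq> 0" "s + 1 / s \<in> \<real>" "t + 1 / t \<in> \<real>"
    and "t / s \<notin> \<real>" "cmod (t / s) = 1"
  shows "cmod t = 1"
proof (cases "t \<in> \<real>")
  case True
  then have "s \<notin> \<real>"
    using assms(4) by auto
  then have "cmod s = 1"
    using assms(2) cmod_eq_1_if_plus_inverse_real by blast
  then show ?thesis
    using assms(5) by (simp add: norm_divide)
next
  case False
  then show ?thesis
    using assms(3) cmod_eq_1_if_plus_inverse_real by blast
qed

locale anchored_system =
  fixes d :: nat and a :: "nat \<Rightarrow> nat \<Rightarrow> complex" and w :: "nat \<Rightarrow> complex" and i0 i1 :: nat
  assumes sym: "\<And>i j. i \<le> d \<Longrightarrow> j \<le> d \<Longrightarrow> i \<noteq> j \<Longrightarrow> a i j = a j i"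
    and gz: "\<And>i j k. i \<le> d \<Longrightarrow> j \<le> d \<Longrightarrow> k \<le> d \<Longrightarrow> i \<noteq> j \<Longrightarrow> i \<noteq> k \<Longrightarrow> j \<noteq> k
              \<Longrightarrow> g (a i j) (a j k) (a i k) = 0"
    and hz: "\<And>i j k l. i \<le> d \<Longrightarrow> j \<le> d \<Longrightarrow> k \<le> d \<Longrightarrow> l \<le> d \<Longrightarrow>
              i \<noteq> j \<Longrightarrow> i \<noteq> k \<Longrightarrow> i \<noteq> l \<Longrightarrow> j \<noteq> k \<Longrightarrow> j \<noteq> l \<Longrightarrow> k \<noteq> l
              \<Longrightarrow> h (a i j) (a i k) (a i l) (a j k) (a j l) (a k l) = 0"
    and anchors: "i0 < i1" "i1 \<le> d"
    and ne2: "a i0 i1 \<noteq> 2" "a i0 i1 \<noteq> -2"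
    and w0: "w i0 \<noteq> 0" and w1: "w i1 \<noteq> 0"
    and w01: "w i0 / w i1 + w i1 / w i0 = a i0 i1"
begin

abbreviation fits :: "nat \<Rightarrow> nat \<Rightarrow> bool" where
  "fits i j \<equiv> w j / w i + w i / w j = a i j"

abbreviation anchored_value :: "nat \<Rightarrow> complex" where
  "anchored_value k \<equiv> (w i1 ^ 2 - w i0 ^ 2) / (a i1 k * w i1 - a i0 k * w i0)"

lemma i0_le: "i0 \<le> d" and i0_neq_i1: "i0 \<noteq> i1"
  using anchors by auto

lemma fits_commute:
  assumes "i \<le> d" "j \<le> d" "i \<noteq> j"
  shows "fits i j \<longleftrightarrow> fits j i"
  using sym[OF assms] by (auto simp: add.commute)

lemma fits_anchors: "fits i0 i1" "fits i1 i0"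
  using w01 fits_commute[OF i0_le anchors(2) i0_neq_i1] by (auto simp: add.commute)

lemma anchor_equation: "(w i0)\<^sup>2 + (w i1)\<^sup>2 = a i0 i1 * w i0 * w i1"
  using w01 add_divide_swap_eq_iff[OF w0 w1] by simp

lemma g_on_anchor_triangle:
  assumes "k \<le> d" "k \<noteq> i0" "k \<noteq> i1"
  shows "g (a i0 i1) (a i1 k) (a i0 k) = 0"
  using gz[OF i0_le anchors(2) assms(1) i0_neq_i1] assms by auto

lemma anchored_value_solves:
  assumes "k \<le> d" "k \<noteq> i0" "k \<noteq> i1" and wk: "w k = anchored_value k"
  shows "w k \<noteq> 0" "fits i1 k" "fits i0 k"
proof -
  note sol = g_common_solution[OF w0 w1 anchor_equation ne2 g_on_anchor_triangle[OF assms(1-3)] wk]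
  show "w k \<noteq> 0"
    using sol(1) .
  show "fits i1 k" "fits i0 k"
    using sol add_divide_swap_eq_iff[OF _ w1] add_divide_swap_eq_iff[OF _ w0] by simp_all
qed

lemma fits_anchors_iff_anchored_value:
  assumes "k \<le> d" "k \<noteq> i0" "k \<noteq> i1"
  shows "fits i1 k \<and> fits i0 k \<longleftrightarrow> w k = anchored_value k"
  using anchored_value_solves[OF assms]
    common_solution_unique[OF w0 w1 _ _ g_denominator_nonzero[OF w0 w1 anchor_equation ne2
      g_on_anchor_triangle[OF assms]]]
  by blast

lemma fits_of_fits_anchors:
  assumes ij: "i \<le> d" "j \<le> d" "i \<noteq> j"
    and i: "i \<noteq> i0" "i \<noteq> i1" and j: "j \<noteq> i0" "j \<noteq> i1"
    and fits: "fits i0 i" "fits i0 j" "fits i1 i" "fits i1 j"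
  shows "fits i j"
proof -
  have "w i \<noteq> 0" "w j \<noteq> 0"
    using anchored_value_solves(1) fits_anchors_iff_anchored_value ij i j fits by metis+
  moreover have "h (a i0 i1) (a i0 i) (a i0 j) (a i1 i) (a i1 j) (a i j) = 0"
    using hz[OF i0_le anchors(2) ij(1,2)] i0_neq_i1 ij(3) i j by auto
  ultimately show ?thesis
    using h_determines_last_entry[OF w0 w1, of "w i" "w j" "a i j"] fits ne2 w01 by simp
qed

lemma all_fits_iff_anchored_values:
  "(\<forall>i\<le>d. \<forall>j\<le>d. i \<noteq> j \<longrightarrow> fits i j) \<longleftrightarrow>
     (\<forall>i\<le>d. i \<noteq> i0 \<longrightarrow> i \<noteq> i1 \<longrightarrow> w i = anchored_value i)"
proof
  assume "\<forall>i\<le>d. \<forall>j\<le>d. i \<noteq> j \<longrightarrow> fits i j"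
  then show "\<forall>i\<le>d. i \<noteq> i0 \<longrightarrow> i \<noteq> i1 \<longrightarrow> w i = anchored_value i"
    using fits_anchors_iff_anchored_value i0_le anchors(2) by blast
next
  assume "\<forall>i\<le>d. i \<noteq> i0 \<longrightarrow> i \<noteq> i1 \<longrightarrow> w i = anchored_value i"
  then have anchor_fits: "fits i k" if "i \<in> {i0, i1}" "k \<le> d" "k \<noteq> i" for i k
    using that fits_anchors fits_anchors_iff_anchored_value by blast
  show "\<forall>i\<le>d. \<forall>j\<le>d. i \<noteq> j \<longrightarrow> fits i j"
  proof (intro allI impI)
    fix i j assume ij: "i \<le> d" "j \<le> d" "i \<noteq> j"
    consider "i \<in> {i0, i1}" | "j \<in> {i0, i1}" | "i \<notin> {i0, i1}" "j \<notin> {i0, i1}"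
      by blast
    then show "fits i j"
    proof cases
      case 1
      then show ?thesis using anchor_fits ij by blast
    next
      case 2
      then show ?thesis using anchor_fits ij fits_commute by blast
    next
      case 3
      then show ?thesis using fits_of_fits_anchors ij anchor_fits by simp
    qed
  qed
qed

lemma anchor_ratio_nonreal_unimodular:
  assumes "a i0 i1 \<in> \<real>" "-2 < Re (a i0 i1)" "Re (a i0 i1) < 2"
  shows "w i0 / w i1 \<notin> \<real>" "cmod (w i0 / w i1) = 1"
proof -
  define x where "x = w i0 / w i1"
  have x: "x + 1 / x = a i0 i1" and "x \<noteq> 0"
    using w01 w0 w1 x_def by simp_all
  show "x \<notin> \<real>"
  proof
    assume "x \<in> \<real>"
    then have "2 \<le> \<bar>Re (a i0 i1)\<bar>"
      using abs_Re_plus_inverse_ge_2[OF \<open>x \<in> \<real>\<close> \<open>x \<noteq> 0\<close>] unfolding x by simp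
    then show False
      using assms(2,3) by linarith
  qed
  then show "cmod x = 1"
    using cmod_eq_1_if_plus_inverse_real x assms(1) by simp
qed

lemma all_fits_imp_cmod_eq:
  assumes fits: "\<forall>i\<le>d. \<forall>j\<le>d. i \<noteq> j \<longrightarrow> fits i j"
    and real: "\<forall>i j. i < j \<longrightarrow> j \<le> d \<longrightarrow> a i j \<in> \<real>"
    and between: "-2 < Re (a i0 i1)" "Re (a i0 i1) < 2"
    and k: "k \<le> d"
  shows "cmod (w k) = cmod (w i1)"
proof -
  have a_real: "a i j \<in> \<real>" if "i \<le> d" "j \<le> d" "i \<noteq> j" for i j
    using real sym[OF that] that by (metis linorder_neqE_nat)
  note ratio = anchor_ratio_nonreal_unimodular[OF a_real[OF i0_le anchors(2) i0_neq_i1] between]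
  show ?thesis
  proof (cases "k \<in> {i0, i1}")
    case True
    then show ?thesis
      using ratio(2) w1 by (auto simp: norm_divide)
  next
    case False
    have "w k \<noteq> 0"
      using fits fits_anchors_iff_anchored_value anchored_value_solves(1) i0_le anchors(2) k False
      by (metis insertCI)
    define t where "t = w k / w i1"
    define s where "s = w k / w i0"
    have "s + 1 / s = a i0 k" "t + 1 / t = a i1 k"
      using fits i0_le anchors(2) k False s_def t_def by auto
    moreover have "t / s = w i0 / w i1"
      using \<open>w k \<noteq> 0\<close> unfolding t_def s_def by simp
    ultimately have "cmod t = 1"
      using cmod_eq_1_of_nonreal_unimodular_quotient[of s t] ratio \<open>w k \<noteq> 0\<close> w0
        a_real i0_le anchors(2) k False s_def
      by auto
    then show ?thesis
      using w1 t_def by (simp add: norm_divide)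
  qed
qed

end

theorem lemma2p4:
  fixes d :: nat and a :: "nat \<Rightarrow> nat \<Rightarrow> complex" and w :: "nat \<Rightarrow> complex"
    and i0 i1 :: nat
  assumes "d \<ge> 1"
    and sym: "\<And>i j. i \<le> d \<Longrightarrow> j \<le> d \<Longrightarrow> i \<noteq> j \<Longrightarrow> a i j = a j i"
    and gz: "\<And>i j k. i \<le> d \<Longrightarrow> j \<le> d \<Longrightarrow> k \<le> d \<Longrightarrow> i \<noteq> j \<Longrightarrow> i \<noteq> k \<Longrightarrow> j \<noteq> k
              \<Longrightarrow> g (a i j) (a j k) (a i k) = 0"
    and hz: "\<And>i j k l. i \<le> d \<Longrightarrow> j \<le> d \<Longrightarrow> k \<le> d \<Longrightarrow> l \<le> d \<Longrightarrow>
              i \<noteq> j \<Longrightarrow> i \<noteq> k \<Longrightarrow> i \<noteq> l \<Longrightarrow> j \<noteq> k \<Longrightarrow> j \<noteq> l \<Longrightarrow> k \<noteq> l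
              \<Longrightarrow> h (a i j) (a i k) (a i l) (a j k) (a j l) (a k l) = 0"
    and i01: "i0 < i1" "i1 \<le> d"
    and ne2: "a i0 i1 \<noteq> 2" "a i0 i1 \<noteq> -2"
    and w0: "w i0 \<noteq> 0" and w1: "w i1 \<noteq> 0"
    and w01: "w i0 / w i1 + w i1 / w i0 = a i0 i1"
  shows "((\<forall>i\<le>d. \<forall>j\<le>d. i \<noteq> j \<longrightarrow> w j / w i + w i / w j = a i j) \<longleftrightarrow>
          (\<forall>i\<le>d. i \<noteq> i0 \<longrightarrow> i \<noteq> i1 \<longrightarrow>
              w i = (w i1 ^ 2 - w i0 ^ 2) / (a i1 i * w i1 - a i0 i * w i0)))
       \<and> (((\<forall>i\<le>d. \<forall>j\<le>d. i \<noteq> j \<longrightarrow> w j / w i + w i / w j = a i j)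
            \<and> (\<forall>i j. i < j \<longrightarrow> j \<le> d \<longrightarrow> a i j \<in> \<real>)
            \<and> -2 < Re (a i0 i1) \<and> Re (a i0 i1) < 2)
          \<longrightarrow> (\<forall>i j. i < j \<longrightarrow> j \<le> d \<longrightarrow> cmod (w i) = cmod (w j)))"
proof -
  interpret anchored_system d a w i0 i1
    using assms by unfold_locales auto
  have "cmod (w i) = cmod (w j)"
    if "\<forall>i\<le>d. \<forall>j\<le>d. i \<noteq> j \<longrightarrow> fits i j" "\<forall>i j. i < j \<longrightarrow> j \<le> d \<longrightarrow> a i j \<in> \<real>"
      "-2 < Re (a i0 i1)" "Re (a i0 i1) < 2" "i < j" "j \<le> d" for i j
    using all_fits_imp_cmod_eq[OF that(1-4)] that(5,6) by simp
  then show ?thesis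
    using all_fits_iff_anchored_values by blast
qed

end
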